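(* Let $(\rho,\mathbf{u},\Sigma)$ be a smooth solution on $\Omega\subset\mathbb{R}^d$, with $\rho>0$ and $\alpha>0$, of the pressureless HRE system $$\partial_t\rho+\nabla\cdot(\rho\mathbf{u})=0,\quad \partial_t(\rho\mathbf{u})+\nabla\cdot(\rho\mathbf{u}\otimes\mathbf{u}+\Sigma\,\mathbb{I})=0,\quad \rho^{-1}\Sigma-\alpha\nabla\cdot(\rho^{-1}\nabla\Sigma)=\alpha\,\mathrm{tr}\big((\nabla\mathbf{u})^2\big).$$ Then the generalized kinetic energy density $K_E=\frac12\rho\big(|\mathbf{u}|^2+\alpha(\nabla\cdot\mathbf{u})^2\big)$ satisfies the local conservation law $$\partial_t K_E+\nabla\cdot\big((K_E+\Sigma)\mathbf{u}\big)=0.$$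
   Context: $\nabla\mathbf{u}$ is the velocity gradient matrix, $\mathbb{I}$ the identity matrix, and $(\nabla\cdot(\mathbf{a}\otimes\mathbf{b}))_i=\sum_j\partial_j(a_ib_j)$. *)

theory Defs
  imports "HOL-Analysis.Analysis"
begin

fun Ck :: "nat \<Rightarrow> ('a::real_normed_vector \<Rightarrow> 'b::real_normed_vector) \<Rightarrow> 'a set \<Rightarrow> bool" where
  "Ck 0 f D = continuous_on D f"
| "Ck (Suc k) f D = (f differentiable_on D \<and>
      (\<forall>v. Ck k (\<lambda>p. frechet_derivative f (at p) v) D))"

definition smooth_on :: "('a::real_normed_vector \<Rightarrow> 'b::real_normed_vector) \<Rightarrow> 'a set \<Rightarrow> bool" where
  "smooth_on f D = (\<forall>k. Ck k f D)"

text \<open>Space-time points are pairs (t, x) with x in R^d = real^'n.\<close>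
definition dt :: "(real \<times> (real^'n) \<Rightarrow> real) \<Rightarrow> real \<times> (real^'n) \<Rightarrow> real" where
  "dt f p = frechet_derivative f (at p) (1, 0)"

definition dx :: "'n::finite \<Rightarrow> (real \<times> (real^'n) \<Rightarrow> real) \<Rightarrow> real \<times> (real^'n) \<Rightarrow> real" where
  "dx i f p = frechet_derivative f (at p) (0, axis i 1)"

definition grad_u :: "(real \<times> (real^'n) \<Rightarrow> real^'n) \<Rightarrow> real \<times> (real^'n) \<Rightarrow> real^'n^'n" where
  "grad_u u p = (\<chi> i j. dx j (\<lambda>q. u q $ i) p)"

definition div_u :: "(real \<times> (real^'n::finite) \<Rightarrow> real^'n) \<Rightarrow> real \<times> (real^'n) \<Rightarrow> real" where
  "div_u u p = (\<Sum>i\<in>UNIV. dx i (\<lambda>q. u q $ i) p)"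

definition KE :: "real \<Rightarrow> (real \<times> (real^'n::finite) \<Rightarrow> real) \<Rightarrow> (real \<times> (real^'n) \<Rightarrow> real^'n)
    \<Rightarrow> real \<times> (real^'n) \<Rightarrow> real" where
  "KE \<alpha> \<rho> u q = 1/2 * \<rho> q * ((norm (u q))^2 + \<alpha> * (div_u u q)^2)"

end

theory Submission
  imports Defs
begin

(* Mass and momentum conservation give the advective momentum equation
   D u + grad sigma / rho = 0, where D = d/dt + u . grad is the material derivative.
   Its divergence, D (div u) + tr ((grad u)^2) + div (grad sigma / rho) = 0, needs the
   symmetry of second derivatives; combined with the stress equation it becomes
   alpha D (div u) = - sigma / rho.  Writing K_E = rho phi with phi = (|u|^2 + alpha (div u)^2) / 2,
   mass conservation reduces d/dt K_E + div (K_E u) to rho D phi, which by the two equations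
   above equals - u . grad sigma - sigma div u = - div (sigma u). *)

section \<open>Directional derivatives and C^k functions\<close>

definition dirderiv :: "'a::real_normed_vector \<Rightarrow> ('a \<Rightarrow> 'b::real_normed_vector) \<Rightarrow> 'a \<Rightarrow> 'b" where
  "dirderiv v f p = frechet_derivative f (at p) v"

lemma dt_eq_dirderiv: "dt = dirderiv (1, 0)"
  by (simp add: dt_def dirderiv_def fun_eq_iff)

lemma dx_eq_dirderiv: "dx i = dirderiv (0, axis i 1)"
  by (simp add: dx_def dirderiv_def fun_eq_iff)

lemma has_derivative_dirderiv:
  "f differentiable at p \<Longrightarrow> (f has_derivative (\<lambda>v. dirderiv v f p)) (at p)"
  unfolding dirderiv_def by (simp add: frechet_derivative_works[symmetric] eta_contract_eq)

lemma dirderiv_eqI: "(f has_derivative f') (at p) \<Longrightarrow> dirderiv v f p = f' v"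
  unfolding dirderiv_def by (metis frechet_derivative_at)

lemma dirderiv_const [simp]: "dirderiv v (\<lambda>q. c) p = 0"
  by (simp add: dirderiv_def)

lemma dirderiv_add:
  "f differentiable at p \<Longrightarrow> g differentiable at p \<Longrightarrow>
    dirderiv v (\<lambda>q. f q + g q) p = dirderiv v f p + dirderiv v g p"
  by (intro dirderiv_eqI has_derivative_add has_derivative_dirderiv)

lemma dirderiv_sum:
  "finite I \<Longrightarrow> (\<And>i. i \<in> I \<Longrightarrow> f i differentiable at p) \<Longrightarrow>
    dirderiv v (\<lambda>q. \<Sum>i\<in>I. f i q) p = (\<Sum>i\<in>I. dirderiv v (f i) p)"
  by (intro dirderiv_eqI has_derivative_sum has_derivative_dirderiv)

lemma dirderiv_mult:
  fixes f g :: "'a::real_normed_vector \<Rightarrow> 'b::real_normed_algebra"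
  shows "f differentiable at p \<Longrightarrow> g differentiable at p \<Longrightarrow>
    dirderiv v (\<lambda>q. f q * g q) p = f p * dirderiv v g p + dirderiv v f p * g p"
  by (intro dirderiv_eqI has_derivative_mult has_derivative_dirderiv)

lemma dirderiv_component:
  "f differentiable at p \<Longrightarrow> dirderiv v (\<lambda>q. f q $ j) p = dirderiv v f p $ j"
  by (intro dirderiv_eqI bounded_linear.has_derivative[OF bounded_linear_vec_nth] has_derivative_dirderiv)

lemma dirderiv_scaleR_direction:
  "f differentiable at p \<Longrightarrow> dirderiv (c *\<^sub>R v) f p = c *\<^sub>R dirderiv v f p"
  unfolding dirderiv_def by (simp add: linear_frechet_derivative linear_scale)

lemma dirderiv_cong_open:
  assumes "open U" "p \<in> U" "\<And>q. q \<in> U \<Longrightarrow> f q = g q"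
  shows "dirderiv v f p = dirderiv v g p"
proof -
  have "(f has_derivative D) (at p) \<longleftrightarrow> (g has_derivative D) (at p)" for D
    using has_derivative_transform_within_open[of f D p UNIV U g]
      has_derivative_transform_within_open[of g D p UNIV U f] assms by auto
  then show ?thesis
    unfolding dirderiv_def frechet_derivative_def by simp
qed

lemma Ck_Suc_iff:
  "open U \<Longrightarrow> Ck (Suc k) f U \<longleftrightarrow> (\<forall>p\<in>U. f differentiable at p) \<and> (\<forall>v. Ck k (dirderiv v f) U)"
  by (simp add: differentiable_on_eq_differentiable_at dirderiv_def[abs_def])

lemma Ck_differentiable_at: "Ck (Suc k) f U \<Longrightarrow> open U \<Longrightarrow> p \<in> U \<Longrightarrow> f differentiable at p"
  by (simp add: differentiable_on_eq_differentiable_at)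

lemma Ck_dirderiv: "Ck (Suc k) f U \<Longrightarrow> Ck k (dirderiv v f) U"
  by (simp add: dirderiv_def[abs_def])

lemma Ck_cong: "open U \<Longrightarrow> (\<And>q. q \<in> U \<Longrightarrow> f q = g q) \<Longrightarrow> Ck k f U = Ck k g U"
proof (induction k arbitrary: f g)
  case 0
  then show ?case by (auto intro: continuous_on_cong)
next
  case (Suc k)
  have "f differentiable at p \<longleftrightarrow> g differentiable at p" if "p \<in> U" for p
    using Suc.prems that unfolding differentiable_def
    by (metis has_derivative_transform_within_open)
  moreover have "Ck k (dirderiv v f) U = Ck k (dirderiv v g) U" for v
    using Suc dirderiv_cong_open by blast
  ultimately show ?case
    using Ck_Suc_iff[OF Suc.prems(1)] by blast
qed

lemma Ck_component: "open U \<Longrightarrow> Ck k f U \<Longrightarrow> Ck k (\<lambda>q. f q $ j) U"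
proof (induction k arbitrary: f)
  case 0
  then show ?case by (simp add: continuous_on_component)
next
  case (Suc k)
  have diff: "\<forall>p\<in>U. f differentiable at p"
    using Suc.prems Ck_differentiable_at by blast
  have "Ck k (\<lambda>q. dirderiv v f q $ j) U" for v
    using Suc.IH[OF Suc.prems(1) Ck_dirderiv[OF Suc.prems(2)]] .
  moreover have "Ck k (\<lambda>q. dirderiv v f q $ j) U = Ck k (dirderiv v (\<lambda>q. f q $ j)) U" for v
  proof (rule Ck_cong[OF Suc.prems(1)])
    show "dirderiv v f q $ j = dirderiv v (\<lambda>q. f q $ j) q" if "q \<in> U" for q
      using diff that by (simp add: dirderiv_component)
  qed
  moreover have "(\<lambda>q. f q $ j) differentiable at p" if "p \<in> U" for p
    using bounded_linear.has_derivative[OF bounded_linear_vec_nth has_derivative_dirderiv] diff that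
    unfolding differentiable_def by blast
  ultimately show ?case
    using Ck_Suc_iff[OF Suc.prems(1), of k "\<lambda>q. f q $ j"] by blast
qed

lemma Ck2_differentiable_at:
  assumes "Ck 2 f U" "open U" "p \<in> U"
  shows "f differentiable at p" and "dirderiv v f differentiable at p"
proof -
  have C2: "Ck (Suc (Suc 0)) f U"
    using assms(1) by (simp only: numeral_2_eq_2)
  show "f differentiable at p"
    by (rule Ck_differentiable_at[OF C2 assms(2,3)])
  show "dirderiv v f differentiable at p"
    by (rule Ck_differentiable_at[OF Ck_dirderiv[OF C2] assms(2,3)])
qed

section \<open>Symmetry of second derivatives\<close>

lemma has_real_derivative_along_line:
  fixes f :: "'a::real_normed_vector \<Rightarrow> real"
  assumes "f differentiable at (a + t *\<^sub>R v)"
  shows "((\<lambda>t. f (a + t *\<^sub>R v)) has_real_derivative dirderiv v f (a + t *\<^sub>R v)) (at t)"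
proof -
  have "((\<lambda>t. a + t *\<^sub>R v) has_derivative (\<lambda>h. h *\<^sub>R v)) (at t)"
    by (auto intro!: derivative_eq_intros)
  from diff_chain_at[OF this has_derivative_dirderiv[OF assms]]
  show ?thesis
    by (simp add: o_def has_field_derivative_def dirderiv_scaleR_direction[OF assms] mult_commute_abs)
qed

lemma second_difference_mean_value:
  fixes f :: "'a::real_normed_vector \<Rightarrow> real"
  assumes "s > 0"
    and inU: "\<And>t r. 0 \<le> t \<Longrightarrow> t \<le> s \<Longrightarrow> 0 \<le> r \<Longrightarrow> r \<le> s \<Longrightarrow> p + t *\<^sub>R v + r *\<^sub>R w \<in> U"
    and f: "\<And>q. q \<in> U \<Longrightarrow> f differentiable at q"
    and f': "\<And>q. q \<in> U \<Longrightarrow> dirderiv v f differentiable at q"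
  obtains t r where "0 < t" "t < s" "0 < r" "r < s"
    "f (p + s *\<^sub>R v + s *\<^sub>R w) - f (p + s *\<^sub>R v) - f (p + s *\<^sub>R w) + f p
      = s\<^sup>2 * dirderiv w (dirderiv v f) (p + t *\<^sub>R v + r *\<^sub>R w)"
proof -
  define \<phi> where "\<phi> t = f ((p + s *\<^sub>R w) + t *\<^sub>R v) - f (p + t *\<^sub>R v)" for t
  have "(\<phi> has_real_derivative dirderiv v f ((p + s *\<^sub>R w) + t *\<^sub>R v) - dirderiv v f (p + t *\<^sub>R v)) (at t)"
    if "0 \<le> t" "t \<le> s" for t
    unfolding \<phi>_def[abs_def] using inU[of t s] inU[of t 0] that \<open>s > 0\<close>
    by (intro DERIV_diff has_real_derivative_along_line f) (simp_all add: add_ac)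
  from MVT2[OF \<open>s > 0\<close> this] obtain t where t: "0 < t" "t < s" and \<phi>_mvt:
    "\<phi> s - \<phi> 0 = s * (dirderiv v f ((p + s *\<^sub>R w) + t *\<^sub>R v) - dirderiv v f (p + t *\<^sub>R v))"
    by auto
  define \<psi> where "\<psi> r = dirderiv v f ((p + t *\<^sub>R v) + r *\<^sub>R w)" for r
  have "(\<psi> has_real_derivative dirderiv w (dirderiv v f) ((p + t *\<^sub>R v) + r *\<^sub>R w)) (at r)"
    if "0 \<le> r" "r \<le> s" for r
    unfolding \<psi>_def[abs_def] using inU[of t r] that t
    by (intro has_real_derivative_along_line f') simp
  from MVT2[OF \<open>s > 0\<close> this] obtain r where r: "0 < r" "r < s" and \<psi>_mvt:
    "\<psi> s - \<psi> 0 = s * dirderiv w (dirderiv v f) ((p + t *\<^sub>R v) + r *\<^sub>R w)"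
    by auto
  have "f (p + s *\<^sub>R v + s *\<^sub>R w) - f (p + s *\<^sub>R v) - f (p + s *\<^sub>R w) + f p = \<phi> s - \<phi> 0"
    unfolding \<phi>_def by (simp add: add_ac)
  also have "\<dots> = s * (\<psi> s - \<psi> 0)"
    unfolding \<phi>_mvt \<psi>_def by (simp add: add_ac)
  also have "\<dots> = s\<^sup>2 * dirderiv w (dirderiv v f) (p + t *\<^sub>R v + r *\<^sub>R w)"
    unfolding \<psi>_mvt by (simp add: power2_eq_square)
  finally show ?thesis
    using t r that by blast
qed

lemma eventually_nhds_parallelogram:
  fixes p :: "'a::real_normed_vector"
  assumes "eventually P (nhds p)"
  shows "\<exists>s>0. \<forall>t\<in>{0..s}. \<forall>r\<in>{0..s}. P (p + t *\<^sub>R v + r *\<^sub>R w)"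
proof -
  obtain d where "d > 0" and d: "\<And>x. dist x p < d \<Longrightarrow> P x"
    using assms unfolding eventually_nhds_metric by blast
  have "norm v + norm w + 1 > 0"
    by (simp add: add_nonneg_pos)
  define s where "s = d / (norm v + norm w + 1)"
  have "s > 0"
    using \<open>d > 0\<close> \<open>norm v + norm w + 1 > 0\<close> by (simp add: s_def)
  moreover have "P (p + t *\<^sub>R v + r *\<^sub>R w)" if "t \<in> {0..s}" "r \<in> {0..s}" for t r
  proof (rule d)
    have "dist (p + t *\<^sub>R v + r *\<^sub>R w) p \<le> t * norm v + r * norm w"
      using norm_triangle_ineq[of "t *\<^sub>R v" "r *\<^sub>R w"] that by (simp add: dist_norm)
    also have "\<dots> \<le> s * (norm v + norm w)"
      using that by (simp add: distrib_left add_mono mult_right_mono)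
    also have "\<dots> < s * (norm v + norm w + 1)"
      using \<open>s > 0\<close> by simp
    also have "\<dots> = d"
      using \<open>norm v + norm w + 1 > 0\<close> by (simp add: s_def)
    finally show "dist (p + t *\<^sub>R v + r *\<^sub>R w) p < d" .
  qed
  ultimately show ?thesis
    by blast
qed

lemma mixed_derivatives_meet:
  fixes f :: "'a::real_normed_vector \<Rightarrow> real"
  assumes "open U" "Ck 2 f U" "s > 0"
    and inU: "\<And>t r. 0 \<le> t \<Longrightarrow> t \<le> s \<Longrightarrow> 0 \<le> r \<Longrightarrow> r \<le> s \<Longrightarrow> p + t *\<^sub>R v + r *\<^sub>R w \<in> U"
  obtains t1 r1 t2 r2 where "t1 \<in> {0..s}" "r1 \<in> {0..s}" "t2 \<in> {0..s}" "r2 \<in> {0..s}"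
    "dirderiv w (dirderiv v f) (p + t1 *\<^sub>R v + r1 *\<^sub>R w) = dirderiv v (dirderiv w f) (p + t2 *\<^sub>R v + r2 *\<^sub>R w)"
proof -
  have diff: "f differentiable at q" "dirderiv v f differentiable at q" "dirderiv w f differentiable at q"
    if "q \<in> U" for q
    using Ck2_differentiable_at[OF assms(2,1) that] by blast+
  have inU': "p + r *\<^sub>R w + t *\<^sub>R v \<in> U" if "0 \<le> t" "t \<le> s" "0 \<le> r" "r \<le> s" for t r
    using inU[OF that] by (simp add: algebra_simps)
  obtain t1 r1 where "0 < t1" "t1 < s" "0 < r1" "r1 < s" and mvt1:
    "f (p + s *\<^sub>R v + s *\<^sub>R w) - f (p + s *\<^sub>R v) - f (p + s *\<^sub>R w) + f p
      = s\<^sup>2 * dirderiv w (dirderiv v f) (p + t1 *\<^sub>R v + r1 *\<^sub>R w)"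
    by (rule second_difference_mean_value[OF \<open>s > 0\<close> inU diff(1,2)])
  obtain r2 t2 where "0 < r2" "r2 < s" "0 < t2" "t2 < s" and mvt2:
    "f (p + s *\<^sub>R w + s *\<^sub>R v) - f (p + s *\<^sub>R w) - f (p + s *\<^sub>R v) + f p
      = s\<^sup>2 * dirderiv v (dirderiv w f) (p + r2 *\<^sub>R w + t2 *\<^sub>R v)"
    by (rule second_difference_mean_value[OF \<open>s > 0\<close> inU' diff(1,3)])
  have swap: "p + s *\<^sub>R w + s *\<^sub>R v = p + s *\<^sub>R v + s *\<^sub>R w"
    "p + r2 *\<^sub>R w + t2 *\<^sub>R v = p + t2 *\<^sub>R v + r2 *\<^sub>R w"
    by (simp_all add: algebra_simps)
  have "s\<^sup>2 * dirderiv w (dirderiv v f) (p + t1 *\<^sub>R v + r1 *\<^sub>R w)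
      = s\<^sup>2 * dirderiv v (dirderiv w f) (p + t2 *\<^sub>R v + r2 *\<^sub>R w)"
    using mvt1 mvt2 unfolding swap by linarith
  then show ?thesis
    using \<open>s > 0\<close> \<open>t1 < s\<close> \<open>r1 < s\<close> \<open>t2 < s\<close> \<open>r2 < s\<close>
      \<open>0 < t1\<close> \<open>0 < r1\<close> \<open>0 < t2\<close> \<open>0 < r2\<close> by (intro that[of t1 r1 t2 r2]) auto
qed

lemma dirderiv_commute:
  fixes f :: "'a::real_normed_vector \<Rightarrow> real"
  assumes "open U" "p \<in> U" "Ck 2 f U"
  shows "dirderiv w (dirderiv v f) p = dirderiv v (dirderiv w f) p"
proof (rule ccontr)
  define A B where "A = dirderiv w (dirderiv v f) p" and "B = dirderiv v (dirderiv w f) p"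
  assume "A \<noteq> B"
  define e where "e = \<bar>A - B\<bar> / 2"
  have "e > 0"
    using \<open>A \<noteq> B\<close> by (simp add: e_def)
  have "Ck (Suc (Suc 0)) f U"
    using assms(3) by (simp only: numeral_2_eq_2)
  then have "continuous_on U (dirderiv w (dirderiv v f))" "continuous_on U (dirderiv v (dirderiv w f))"
    using Ck_dirderiv[OF Ck_dirderiv] Ck.simps(1) by blast+
  then have "isCont (dirderiv w (dirderiv v f)) p" "isCont (dirderiv v (dirderiv w f)) p"
    using assms(1,2) by (simp_all add: continuous_on_eq_continuous_at)
  then have "eventually (\<lambda>x. x \<in> U \<and> dist (dirderiv w (dirderiv v f) x) A < e
      \<and> dist (dirderiv v (dirderiv w f) x) B < e) (nhds p)"
    using \<open>e > 0\<close> eventually_nhds_in_open[OF assms(1,2)]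
    by (auto simp: A_def B_def isCont_def tendsto_at_iff_tendsto_nhds intro!: eventually_conj tendstoD)
  then obtain s where "s > 0" and near: "\<forall>t\<in>{0..s}. \<forall>r\<in>{0..s}.
      p + t *\<^sub>R v + r *\<^sub>R w \<in> U \<and> dist (dirderiv w (dirderiv v f) (p + t *\<^sub>R v + r *\<^sub>R w)) A < e
      \<and> dist (dirderiv v (dirderiv w f) (p + t *\<^sub>R v + r *\<^sub>R w)) B < e"
    using eventually_nhds_parallelogram[where v = v and w = w] by blast
  moreover have "p + t *\<^sub>R v + r *\<^sub>R w \<in> U" if "0 \<le> t" "t \<le> s" "0 \<le> r" "r \<le> s" for t r
    using near that by auto
  ultimately obtain t1 r1 t2 r2 where "t1 \<in> {0..s}" "r1 \<in> {0..s}" "t2 \<in> {0..s}" "r2 \<in> {0..s}"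
    and meet: "dirderiv w (dirderiv v f) (p + t1 *\<^sub>R v + r1 *\<^sub>R w)
      = dirderiv v (dirderiv w f) (p + t2 *\<^sub>R v + r2 *\<^sub>R w)"
    using mixed_derivatives_meet[OF assms(1,3)] by blast
  have "dist (dirderiv w (dirderiv v f) (p + t1 *\<^sub>R v + r1 *\<^sub>R w)) A < e"
    using near \<open>t1 \<in> {0..s}\<close> \<open>r1 \<in> {0..s}\<close> by blast
  moreover have "dist (dirderiv w (dirderiv v f) (p + t1 *\<^sub>R v + r1 *\<^sub>R w)) B < e"
    unfolding meet using near \<open>t2 \<in> {0..s}\<close> \<open>r2 \<in> {0..s}\<close> by blast
  ultimately have "\<bar>A - B\<bar> < e + e"
    unfolding dist_real_def by linarith
  then show False
    unfolding e_def by simp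
qed

section \<open>Material derivative and the pressureless HRE system\<close>

definition material_derivative ::
    "(real \<times> (real^'n::finite) \<Rightarrow> real^'n) \<Rightarrow> (real \<times> (real^'n) \<Rightarrow> real) \<Rightarrow> real \<times> (real^'n) \<Rightarrow> real" where
  "material_derivative u f p = dt f p + (\<Sum>i\<in>UNIV. u p $ i * dx i f p)"

lemma material_derivative_const [simp]: "material_derivative u (\<lambda>q. c) p = 0"
  by (simp add: material_derivative_def dt_eq_dirderiv dx_eq_dirderiv)

lemma material_derivative_add:
  "f differentiable at p \<Longrightarrow> g differentiable at p \<Longrightarrow>
    material_derivative u (\<lambda>q. f q + g q) p = material_derivative u f p + material_derivative u g p"
  by (simp add: material_derivative_def dt_eq_dirderiv dx_eq_dirderiv dirderiv_add
      sum.distrib distrib_left)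

lemma material_derivative_mult:
  "f differentiable at p \<Longrightarrow> g differentiable at p \<Longrightarrow>
    material_derivative u (\<lambda>q. f q * g q) p = f p * material_derivative u g p + material_derivative u f p * g p"
  by (simp add: material_derivative_def dt_eq_dirderiv dx_eq_dirderiv dirderiv_mult
      sum.distrib sum_distrib_left sum_distrib_right algebra_simps)

lemma material_derivative_divide_const:
  "f differentiable at p \<Longrightarrow> material_derivative u (\<lambda>q. f q / c) p = material_derivative u f p / c"
  using material_derivative_mult[of f p "\<lambda>_. 1 / c" u] by simp

lemma material_derivative_sum:
  "finite I \<Longrightarrow> (\<And>k. k \<in> I \<Longrightarrow> f k differentiable at p) \<Longrightarrow>
    material_derivative u (\<lambda>q. \<Sum>k\<in>I. f k q) p = (\<Sum>k\<in>I. material_derivative u (f k) p)"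
  by (simp add: material_derivative_def dt_eq_dirderiv dx_eq_dirderiv dirderiv_sum
      sum.distrib sum_distrib_left sum.swap[of _ I])

lemma conservative_eq_advective:
  assumes "\<rho> differentiable at p" "f differentiable at p" "\<And>i. (\<lambda>q. u q $ i) differentiable at p"
  shows "dt (\<lambda>q. \<rho> q * f q) p + (\<Sum>i\<in>UNIV. dx i (\<lambda>q. \<rho> q * f q * u q $ i) p)
    = f p * (dt \<rho> p + (\<Sum>i\<in>UNIV. dx i (\<lambda>q. \<rho> q * u q $ i) p)) + \<rho> p * material_derivative u f p"
  using assms
  by (simp add: material_derivative_def dt_eq_dirderiv dx_eq_dirderiv dirderiv_mult
      sum.distrib sum_distrib_left algebra_simps)

lemma advective_momentum_equation:
  fixes \<rho> \<sigma> :: "real \<times> (real^'n) \<Rightarrow> real" and u :: "real \<times> (real^'n) \<Rightarrow> real^'n"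
  assumes diff: "\<rho> differentiable at p" "\<sigma> differentiable at p" "\<And>i. (\<lambda>q. u q $ i) differentiable at p"
    and "\<rho> p \<noteq> 0"
    and mass: "dt \<rho> p + (\<Sum>i\<in>UNIV. dx i (\<lambda>q. \<rho> q * u q $ i) p) = 0"
    and mom: "dt (\<lambda>q. \<rho> q * u q $ j) p
      + (\<Sum>i\<in>UNIV. dx i (\<lambda>q. \<rho> q * u q $ j * u q $ i + (if i = j then \<sigma> q else 0)) p) = 0"
  shows "material_derivative u (\<lambda>q. u q $ j) p + dx j \<sigma> p / \<rho> p = 0"
proof -
  have "dx i (\<lambda>q. \<rho> q * u q $ j * u q $ i + (if i = j then \<sigma> q else 0)) p
      = dx i (\<lambda>q. \<rho> q * u q $ j * u q $ i) p + (if i = j then dx j \<sigma> p else 0)" for i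
    using diff by (cases "i = j") (simp_all add: dx_eq_dirderiv dirderiv_add)
  then have "\<rho> p * material_derivative u (\<lambda>q. u q $ j) p + dx j \<sigma> p = 0"
    using mom conservative_eq_advective[OF diff(1) diff(3)[of j] diff(3)] mass by (simp add: sum.distrib)
  then show ?thesis
    using \<open>\<rho> p \<noteq> 0\<close> by (simp add: field_simps)
qed

lemma material_derivative_eq_dirderiv:
  "material_derivative u f = (\<lambda>q. dirderiv (1, 0) f q + (\<Sum>i\<in>UNIV. u q $ i * dirderiv (0, axis i 1) f q))"
  by (simp add: fun_eq_iff material_derivative_def dt_eq_dirderiv dx_eq_dirderiv)

lemma dirderiv_material_derivative:
  assumes "open U" "p \<in> U" "Ck 2 f U" "\<And>i. (\<lambda>q. u q $ i) differentiable at p"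
  shows "dirderiv v (material_derivative u f) p
    = material_derivative u (dirderiv v f) p + (\<Sum>i\<in>UNIV. dirderiv v (\<lambda>q. u q $ i) p * dx i f p)"
proof -
  have f': "dirderiv w f differentiable at p" for w
    using Ck2_differentiable_at(2)[OF assms(3,1,2)] .
  have "dirderiv v (material_derivative u f) p = dirderiv v (dirderiv (1, 0) f) p
      + (\<Sum>i\<in>UNIV. u p $ i * dirderiv v (dirderiv (0, axis i 1) f) p
        + dirderiv v (\<lambda>q. u q $ i) p * dirderiv (0, axis i 1) f p)"
    unfolding material_derivative_eq_dirderiv using f' assms(4)
    by (simp add: dirderiv_add dirderiv_sum dirderiv_mult)
  also have "\<dots> = material_derivative u (dirderiv v f) p + (\<Sum>i\<in>UNIV. dirderiv v (\<lambda>q. u q $ i) p * dx i f p)"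
    unfolding material_derivative_eq_dirderiv dx_eq_dirderiv dirderiv_commute[OF assms(1-3), of v]
    by (simp add: sum.distrib)
  finally show ?thesis .
qed

lemma trace_grad_u_square:
  "trace (grad_u u p ** grad_u u p) = (\<Sum>i\<in>UNIV. \<Sum>j\<in>UNIV. dx j (\<lambda>q. u q $ i) p * dx i (\<lambda>q. u q $ j) p)"
  by (simp add: trace_def grad_u_def matrix_matrix_mult_def)

lemma material_derivative_div_u:
  fixes \<rho> \<sigma> :: "real \<times> (real^'n) \<Rightarrow> real" and u :: "real \<times> (real^'n) \<Rightarrow> real^'n"
  assumes "open U" "p \<in> U" "Ck 2 \<rho> U" "Ck 2 \<sigma> U" "\<And>i. Ck 2 (\<lambda>q. u q $ i) U" "\<rho> p \<noteq> 0"
    and vel: "\<And>q j. q \<in> U \<Longrightarrow> material_derivative u (\<lambda>q. u q $ j) q + dx j \<sigma> q / \<rho> q = 0"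
  shows "material_derivative u (div_u u) p + trace (grad_u u p ** grad_u u p)
    + (\<Sum>j\<in>UNIV. dx j (\<lambda>q. dx j \<sigma> q / \<rho> q) p) = 0"
proof -
  note diff = Ck2_differentiable_at[OF _ assms(1,2)]
  have "dx j (material_derivative u (\<lambda>q. u q $ j)) p + dx j (\<lambda>q. dx j \<sigma> q / \<rho> q) p = 0" for j
  proof -
    have "material_derivative u (\<lambda>q. u q $ j) differentiable at p"
      unfolding material_derivative_eq_dirderiv using diff[OF assms(5)] by simp
    moreover have "(\<lambda>q. dx j \<sigma> q / \<rho> q) differentiable at p"
      unfolding dx_eq_dirderiv using diff(1)[OF assms(3)] diff(2)[OF assms(4)] assms(6) by simp
    ultimately have "dx j (\<lambda>q. material_derivative u (\<lambda>q. u q $ j) q + dx j \<sigma> q / \<rho> q) p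
        = dx j (material_derivative u (\<lambda>q. u q $ j)) p + dx j (\<lambda>q. dx j \<sigma> q / \<rho> q) p"
      unfolding dx_eq_dirderiv by (rule dirderiv_add)
    moreover have "dx j (\<lambda>q. material_derivative u (\<lambda>q. u q $ j) q + dx j \<sigma> q / \<rho> q) p = dx j (\<lambda>q. 0) p"
      unfolding dx_eq_dirderiv by (intro dirderiv_cong_open[OF assms(1,2)] vel[unfolded dx_eq_dirderiv])
    ultimately show ?thesis
      by (simp add: dx_eq_dirderiv)
  qed
  then have "(\<Sum>j\<in>UNIV. material_derivative u (dx j (\<lambda>q. u q $ j)) p
      + (\<Sum>i\<in>UNIV. dx j (\<lambda>q. u q $ i) p * dx i (\<lambda>q. u q $ j) p)
      + dx j (\<lambda>q. dx j \<sigma> q / \<rho> q) p) = 0"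
    using dirderiv_material_derivative[OF assms(1,2,5) diff(1)[OF assms(5)]] by (simp add: dx_eq_dirderiv)
  moreover have "material_derivative u (div_u u) p = (\<Sum>j\<in>UNIV. material_derivative u (dx j (\<lambda>q. u q $ j)) p)"
    unfolding div_u_def[abs_def]
    by (rule material_derivative_sum) (simp_all add: dx_eq_dirderiv diff(2)[OF assms(5)])
  moreover have "trace (grad_u u p ** grad_u u p)
      = (\<Sum>j\<in>UNIV. \<Sum>i\<in>UNIV. dx j (\<lambda>q. u q $ i) p * dx i (\<lambda>q. u q $ j) p)"
    unfolding trace_grad_u_square by (rule sum.swap)
  ultimately show ?thesis
    by (simp add: sum.distrib)
qed

lemma kinetic_energy_balance:
  fixes \<rho> \<sigma> :: "real \<times> (real^'n) \<Rightarrow> real" and u :: "real \<times> (real^'n) \<Rightarrow> real^'n"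
  assumes diff: "\<rho> differentiable at p" "\<sigma> differentiable at p" "\<And>i. (\<lambda>q. u q $ i) differentiable at p"
      "div_u u differentiable at p"
    and "\<rho> p \<noteq> 0"
    and mass: "dt \<rho> p + (\<Sum>i\<in>UNIV. dx i (\<lambda>q. \<rho> q * u q $ i) p) = 0"
    and vel: "\<And>j. material_derivative u (\<lambda>q. u q $ j) p + dx j \<sigma> p / \<rho> p = 0"
    and div: "\<alpha> * material_derivative u (div_u u) p = - \<sigma> p / \<rho> p"
  shows "dt (KE \<alpha> \<rho> u) p + (\<Sum>i\<in>UNIV. dx i (\<lambda>q. (KE \<alpha> \<rho> u q + \<sigma> q) * u q $ i) p) = 0"
proof -
  define \<phi> where "\<phi> q = ((\<Sum>k\<in>UNIV. u q $ k * u q $ k) + \<alpha> * (div_u u q * div_u u q)) / 2" for q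
  have "(norm (u q))\<^sup>2 = (\<Sum>k\<in>UNIV. u q $ k * u q $ k)" for q
    by (simp add: power2_norm_eq_inner inner_vec_def)
  then have KE: "KE \<alpha> \<rho> u = (\<lambda>q. \<rho> q * \<phi> q)"
    by (simp add: fun_eq_iff KE_def \<phi>_def power2_eq_square)
  have \<phi>': "\<phi> differentiable at p"
    unfolding \<phi>_def[abs_def] using diff by simp
  have flux: "dx i (\<lambda>q. (\<rho> q * \<phi> q + \<sigma> q) * u q $ i) p
      = dx i (\<lambda>q. \<rho> q * \<phi> q * u q $ i) p + (\<sigma> p * dx i (\<lambda>q. u q $ i) p + u p $ i * dx i \<sigma> p)" for i
    using diff \<phi>' by (simp add: dx_eq_dirderiv dirderiv_add dirderiv_mult algebra_simps)
  have "dt (KE \<alpha> \<rho> u) p + (\<Sum>i\<in>UNIV. dx i (\<lambda>q. (KE \<alpha> \<rho> u q + \<sigma> q) * u q $ i) p)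
      = \<rho> p * material_derivative u \<phi> p + (\<sigma> p * div_u u p + (\<Sum>i\<in>UNIV. u p $ i * dx i \<sigma> p))"
    using conservative_eq_advective[OF diff(1) \<phi>' diff(3)] mass
    unfolding KE flux div_u_def by (simp add: sum.distrib sum_distrib_left)
  also have "material_derivative u \<phi> p
      = (\<Sum>k\<in>UNIV. u p $ k * material_derivative u (\<lambda>q. u q $ k) p)
        + div_u u p * (\<alpha> * material_derivative u (div_u u) p)"
    unfolding \<phi>_def[abs_def] using diff
    by (simp add: material_derivative_add material_derivative_mult material_derivative_sum
        material_derivative_divide_const) (simp add: sum.distrib sum_distrib_left algebra_simps)
  also have "\<rho> p * \<dots> = (\<Sum>k\<in>UNIV. u p $ k * (\<rho> p * material_derivative u (\<lambda>q. u q $ k) p))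
      + div_u u p * (\<rho> p * (\<alpha> * material_derivative u (div_u u) p))"
    by (simp add: sum_distrib_left algebra_simps)
  also have "\<dots> = - (\<Sum>k\<in>UNIV. u p $ k * dx k \<sigma> p) - \<sigma> p * div_u u p"
  proof -
    have "\<rho> p * material_derivative u (\<lambda>q. u q $ k) p = - dx k \<sigma> p" for k
      using vel[of k] \<open>\<rho> p \<noteq> 0\<close> by (simp add: field_simps)
    moreover have "\<rho> p * (\<alpha> * material_derivative u (div_u u) p) = - \<sigma> p"
      using div \<open>\<rho> p \<noteq> 0\<close> by (simp add: field_simps)
    ultimately show ?thesis
      by (simp add: sum_negf)
  qed
  finally show ?thesis
    by simp
qed

theorem mainTheorem8:
  fixes \<rho> \<sigma> :: "real \<times> (real^'n) \<Rightarrow> real"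
    and u :: "real \<times> (real^'n) \<Rightarrow> real^'n"
    and \<alpha> :: real and T :: "real set" and \<Omega> :: "(real^'n) set"
  assumes "open T" and "open \<Omega>"
    and "smooth_on \<rho> (T \<times> \<Omega>)" and "smooth_on u (T \<times> \<Omega>)" and "smooth_on \<sigma> (T \<times> \<Omega>)"
    and "\<forall>p\<in>T \<times> \<Omega>. \<rho> p > 0" and "\<alpha> > 0"
    and mass: "\<forall>p\<in>T \<times> \<Omega>. dt \<rho> p + (\<Sum>i\<in>UNIV. dx i (\<lambda>q. \<rho> q * u q $ i) p) = 0"
    and mom: "\<forall>p\<in>T \<times> \<Omega>. \<forall>j. dt (\<lambda>q. \<rho> q * u q $ j) p
               + (\<Sum>i\<in>UNIV. dx i (\<lambda>q. \<rho> q * u q $ j * u q $ i + (if i = j then \<sigma> q else 0)) p) = 0"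
    and stress: "\<forall>p\<in>T \<times> \<Omega>. \<sigma> p / \<rho> p - \<alpha> * (\<Sum>i\<in>UNIV. dx i (\<lambda>q. dx i \<sigma> q / \<rho> q) p)
               = \<alpha> * trace (grad_u u p ** grad_u u p)"
  shows "\<forall>p\<in>T \<times> \<Omega>. dt (KE \<alpha> \<rho> u) p
           + (\<Sum>i\<in>UNIV. dx i (\<lambda>q. (KE \<alpha> \<rho> u q + \<sigma> q) * u q $ i) p) = 0"
proof
  fix p assume "p \<in> T \<times> \<Omega>"
  define U where "U = T \<times> \<Omega>"
  have "open U" "p \<in> U"
    using assms(1,2) \<open>p \<in> T \<times> \<Omega>\<close> by (simp_all add: U_def open_Times)
  have C2: "Ck 2 \<rho> U" "Ck 2 \<sigma> U" "\<And>i. Ck 2 (\<lambda>q. u q $ i) U"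
    using assms(3-5) Ck_component[OF \<open>open U\<close>] unfolding smooth_on_def U_def by blast+
  note diff = Ck2_differentiable_at[OF _ \<open>open U\<close>]
  have \<rho>_nonzero: "\<rho> q \<noteq> 0" if "q \<in> U" for q
    using assms(6) that unfolding U_def by (metis less_irrefl)
  have vel: "material_derivative u (\<lambda>q. u q $ j) q + dx j \<sigma> q / \<rho> q = 0" if "q \<in> U" for q j
    using that diff C2 \<rho>_nonzero mass mom unfolding U_def
    by (intro advective_momentum_equation) auto
  have "material_derivative u (div_u u) p + trace (grad_u u p ** grad_u u p)
      + (\<Sum>j\<in>UNIV. dx j (\<lambda>q. dx j \<sigma> q / \<rho> q) p) = 0"
    using material_derivative_div_u[OF \<open>open U\<close> \<open>p \<in> U\<close> C2 \<rho>_nonzero vel] \<open>p \<in> U\<close> by blast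
  then have "\<alpha> * material_derivative u (div_u u) p + \<alpha> * trace (grad_u u p ** grad_u u p)
      + \<alpha> * (\<Sum>j\<in>UNIV. dx j (\<lambda>q. dx j \<sigma> q / \<rho> q) p) = 0"
    by (simp only: distrib_left[symmetric])
  then have "\<alpha> * material_derivative u (div_u u) p = - \<sigma> p / \<rho> p"
    using stress \<open>p \<in> T \<times> \<Omega>\<close> by fastforce
  moreover have "div_u u differentiable at p"
    unfolding div_u_def[abs_def] dx_eq_dirderiv using diff(2)[OF C2(3) \<open>p \<in> U\<close>] by simp
  ultimately show "dt (KE \<alpha> \<rho> u) p + (\<Sum>i\<in>UNIV. dx i (\<lambda>q. (KE \<alpha> \<rho> u q + \<sigma> q) * u q $ i) p) = 0"
    using \<open>p \<in> U\<close> \<open>p \<in> T \<times> \<Omega>\<close> diff C2 \<rho>_nonzero mass vel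
    by (intro kinetic_energy_balance) auto
qed

end
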